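(* $\chi(\operatorname{KG}(F_7))=3$, and $\chi(\operatorname{KG}(N))=5$ where $N$ is the non-Pappus matroid.
   Context: The matroid Kneser graph $\operatorname{KG}(M)$ has the bases of $M$ as vertices, two bases being adjacent when they are disjoint; $\chi$ is chromatic number. $F_7$ is the Fano matroid: rank $3$ on the $7$ points of the Fano plane, bases being the $3$-subsets that are not lines. The non-Pappus matroid $N$ is the rank-$3$ matroid on $\{1,\dots,9\}$ whose bases are the $3$-subsets other than the eight collinear triples $\{1,2,9\},\{4,6,7\},\{1,7,8\},\{1,4,5\},\{2,5,6\},\{6,8,9\},\{3,4,9\},\{2,3,7\}$ (the Pappus configuration with the line $\{3,5,8\}$ removed). *)

theory Defs
  imports Main
begin

text \<open>A rank-3 matroid given by its ground set and the set of collinear triples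
(dependent 3-subsets); its bases are the 3-subsets of the ground set that are not
among those triples.\<close>
definition rank3_bases :: "nat set \<Rightarrow> nat set set \<Rightarrow> nat set set" where
  "rank3_bases E L = {B. B \<subseteq> E \<and> card B = 3 \<and> B \<notin> L}"

text \<open>Matroid Kneser graph: vertices are the bases, adjacent iff disjoint.
A proper k-colouring of KG assigns colours in {..<k} to the bases such that
disjoint (adjacent) bases receive different colours.\<close>
definition kneser_colorable :: "'a set set \<Rightarrow> nat \<Rightarrow> bool" where
  "kneser_colorable \<B> k \<longleftrightarrow>
     (\<exists>c. (\<forall>B\<in>\<B>. c B < k) \<and>
          (\<forall>B1\<in>\<B>. \<forall>B2\<in>\<B>. B1 \<inter> B2 = {} \<longrightarrow> c B1 \<noteq> c B2))"

definition kneser_chromatic_number :: "'a set set \<Rightarrow> nat" where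
  "kneser_chromatic_number \<B> = (LEAST k. kneser_colorable \<B> k)"

definition fano_lines :: "nat set set" where
  "fano_lines = {{1,2,3},{1,4,5},{1,6,7},{2,4,6},{2,5,7},{3,4,7},{3,5,6}}"

definition F7_bases :: "nat set set" where
  "F7_bases = rank3_bases {1..7} fano_lines"

definition nonpappus_lines :: "nat set set" where
  "nonpappus_lines = {{1,2,9},{4,6,7},{1,7,8},{1,4,5},{2,5,6},{6,8,9},{3,4,9},{2,3,7}}"

definition N_bases :: "nat set set" where
  "N_bases = rank3_bases {1..9} nonpappus_lines"

end

theory Submission
  imports Defs "HOL-Combinatorics.Transposition"
begin

(* Coloring a basis by its least element, with all bases inside {k..n} sharing the
   last color, is a proper k-coloring of KG as soon as {k..n} has fewer than 2r
   points, since two disjoint r-sets do not fit there; this gives 3 colors for F7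
   and 5 for N.  Conversely, KG(F7) contains a 7-cycle, and KG(N) contains a
   39-vertex subgraph whose 4-colorings are refuted by an exhaustive search tree
   that is checked by evaluation. *)

lemma kneser_colorable_mono:
  assumes "kneser_colorable \<B> k" "k \<le> k'"
  shows "kneser_colorable \<B> k'"
  using assms unfolding kneser_colorable_def by (meson order_less_le_trans)

lemma kneser_chromatic_number_eqI:
  assumes "kneser_colorable \<B> k" "\<not> kneser_colorable \<B> (k - 1)"
  shows "kneser_chromatic_number \<B> = k"
  unfolding kneser_chromatic_number_def
proof (rule Least_equality)
  fix j assume "kneser_colorable \<B> j"
  then show "k \<le> j"
    using assms(2) kneser_colorable_mono[of \<B> j "k - 1"] by fastforce
qed (fact assms(1))

lemma rank3_bases_subset_card:
  assumes "B \<in> rank3_bases E L"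
  shows "B \<subseteq> E" "card B = 3"
  using assms unfolding rank3_bases_def by auto

lemma set_subset_rank3_bases_iff:
  "set Bs \<subseteq> rank3_bases E L \<longleftrightarrow> (\<forall>B\<in>set Bs. B \<subseteq> E \<and> card B = 3 \<and> B \<notin> L)"
  unfolding rank3_bases_def by blast

subsection \<open>Upper bound\<close>

lemma disjoint_subsets_card_le:
  assumes "finite S" "B1 \<subseteq> S" "B2 \<subseteq> S" "B1 \<inter> B2 = {}"
  shows "card B1 + card B2 \<le> card S"
proof -
  have "card B1 + card B2 = card (B1 \<union> B2)"
    using assms by (metis card_Un_disjoint finite_subset)
  also have "\<dots> \<le> card S"
    using assms by (intro card_mono) auto
  finally show ?thesis .
qed

lemma kneser_colorable_least_element:
  assumes \<B>: "\<And>B. B \<in> \<B> \<Longrightarrow> B \<subseteq> {1..n} \<and> card B = r"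
    and "0 < r" "0 < k" "n + 1 < k + 2 * r"
  shows "kneser_colorable \<B> k"
proof -
  define c where "c B = min (Min B - 1) (k - 1)" for B :: "nat set"
  have "c B1 \<noteq> c B2" if in_\<B>: "B1 \<in> \<B>" "B2 \<in> \<B>" and disjoint: "B1 \<inter> B2 = {}" for B1 B2
  proof
    assume same: "c B1 = c B2"
    have B1: "B1 \<subseteq> {1..n}" "card B1 = r" and B2: "B2 \<subseteq> {1..n}" "card B2 = r"
      using \<B> in_\<B> by auto
    then have fin: "finite B1" "finite B2" and ne: "B1 \<noteq> {}" "B2 \<noteq> {}"
      using \<open>0 < r\<close> by (auto intro: finite_subset)
    have pos: "0 < Min B1" "0 < Min B2"
      using B1 B2 Min_in[OF fin(1) ne(1)] Min_in[OF fin(2) ne(2)] by force+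
    show False
    proof (cases "c B1 < k - 1")
      case True
      then have "Min B1 = Min B2"
        using same pos unfolding c_def by (simp add: min_def split: if_splits)
      then show False
        using disjoint Min_in[OF fin(1) ne(1)] Min_in[OF fin(2) ne(2)] by auto
    next
      case False
      then have "k \<le> Min B1" "k \<le> Min B2"
        using same pos unfolding c_def by (simp_all add: min_def split: if_splits)
      then have "B1 \<subseteq> {k..n}" "B2 \<subseteq> {k..n}"
        using B1 B2 Min_le[OF fin(1)] Min_le[OF fin(2)] by (auto simp: subset_iff intro: order_trans)
      then have "card B1 + card B2 \<le> card {k..n}"
        using disjoint by (intro disjoint_subsets_card_le) auto
      then show False
        using B1 B2 \<open>0 < r\<close> \<open>n + 1 < k + 2 * r\<close> by simp
    qed
  qed
  moreover have "c B < k" for B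
    using \<open>0 < k\<close> unfolding c_def by simp
  ultimately show ?thesis
    unfolding kneser_colorable_def by blast
qed

lemma rank3_bases_kneser_colorable:
  assumes "E \<subseteq> {1..n}" "0 < k" "n + 1 < k + 6"
  shows "kneser_colorable (rank3_bases E L) k"
proof (rule kneser_colorable_least_element[where r = 3])
  fix B assume "B \<in> rank3_bases E L"
  then show "B \<subseteq> {1..n} \<and> card B = 3"
    using assms(1) rank3_bases_subset_card by blast
qed (use assms in auto)

subsection \<open>Odd cycles\<close>

lemma odd_cycle_not_kneser_colorable_2:
  assumes "odd (length Cs)" "set Cs \<subseteq> \<B>"
    and adjacent: "\<forall>i<length Cs. Cs ! i \<inter> Cs ! (Suc i mod length Cs) = {}"
  shows "\<not> kneser_colorable \<B> 2"
proof
  assume "kneser_colorable \<B> 2"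
  then obtain c where c2: "\<forall>B\<in>\<B>. c B < (2::nat)"
    and proper: "\<forall>B1\<in>\<B>. \<forall>B2\<in>\<B>. B1 \<inter> B2 = {} \<longrightarrow> c B1 \<noteq> c B2"
    unfolding kneser_colorable_def by blast
  define l where "l = length Cs"
  have l: "0 < l" "odd l"
    using assms(1) unfolding l_def by (auto intro: odd_pos)
  have neq: "c (Cs ! i) \<noteq> c (Cs ! (Suc i mod l))" if "i < l" for i
    using proper adjacent assms(2) that nth_mem[of i Cs] nth_mem[of "Suc i mod l" Cs] l
    unfolding l_def by (meson mod_less_divisor subsetD)
  have binary: "c (Cs ! i) < 2" if "i < l" for i
    using c2 assms(2) that unfolding l_def by (meson nth_mem subsetD)
  have alternating: "c (Cs ! i) = (c (Cs ! 0) + i) mod 2" if "i < l" for i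
    using that
  proof (induction i)
    case (Suc i)
    have "c (Cs ! i) < 2" "c (Cs ! Suc i) < 2" "c (Cs ! Suc i) \<noteq> c (Cs ! i)"
      using binary neq[of i] Suc.prems by simp_all
    with Suc show ?case
      by presburger
  qed (use binary[of 0] l in simp)
  obtain q where "l = 2 * q + 1"
    using l(2) by (rule oddE)
  then have "c (Cs ! (l - 1)) = c (Cs ! 0)"
    using alternating[of "l - 1"] binary[of 0] by simp
  then show False
    using neq[of "l - 1"] l by simp
qed

definition fano_heptagon :: "nat set list" where
  "fano_heptagon = [{1,2,4}, {3,5,7}, {1,2,6}, {3,4,5}, {2,6,7}, {1,3,4}, {5,6,7}]"

lemma F7_not_kneser_colorable_2: "\<not> kneser_colorable F7_bases 2"
proof (rule odd_cycle_not_kneser_colorable_2)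
  show "set fano_heptagon \<subseteq> F7_bases"
    unfolding F7_bases_def set_subset_rank3_bases_iff fano_heptagon_def fano_lines_def
    by code_simp
  show "\<forall>i<length fano_heptagon.
      fano_heptagon ! i \<inter> fano_heptagon ! (Suc i mod length fano_heptagon) = {}"
    unfolding fano_heptagon_def by code_simp
qed (simp add: fano_heptagon_def)

subsection \<open>Refuting graph colorings by search trees\<close>

text \<open>A graph on the vertices below n is given by adjacency lists, and a search state
by a list of the colors still admissible at each vertex.\<close>

definition colors_properly :: "nat list list \<Rightarrow> nat \<Rightarrow> (nat \<Rightarrow> nat) \<Rightarrow> bool" where
  "colors_properly A n g \<longleftrightarrow> (\<forall>v<n. \<forall>u\<in>set (A ! v). u < n \<longrightarrow> g u \<noteq> g v)"

definition within_domains :: "(nat \<Rightarrow> nat) \<Rightarrow> nat list list \<Rightarrow> bool" where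
  "within_domains g D \<longleftrightarrow> (\<forall>w<length D. g w \<in> set (D ! w))"

definition fix_color :: "nat list list \<Rightarrow> nat \<Rightarrow> nat \<Rightarrow> nat list list \<Rightarrow> nat list list" where
  "fix_color A v x D = fold (\<lambda>u D'. D'[u := removeAll x (D' ! u)]) (A ! v) (D[v := [x]])"

datatype search_tree = Leaf nat | Branch nat "search_tree list"

text \<open>A leaf names a vertex without admissible colors; a branch at v has one subtree
for each color still admissible at v, refuting the state where v receives it.\<close>

fun refutes :: "nat list list \<Rightarrow> search_tree \<Rightarrow> nat list list \<Rightarrow> bool"
  and refutes_branches :: "nat list list \<Rightarrow> nat \<Rightarrow> nat list \<Rightarrow> search_tree list \<Rightarrow> nat list list \<Rightarrow> bool"
where
  "refutes A (Leaf v) D \<longleftrightarrow> v < length D \<and> D ! v = []"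
| "refutes A (Branch v ts) D \<longleftrightarrow> v < length D \<and> refutes_branches A v (D ! v) ts D"
| "refutes_branches A v [] [] D \<longleftrightarrow> True"
| "refutes_branches A v (x # xs) (t # ts) D \<longleftrightarrow>
     refutes A t (fix_color A v x D) \<and> refutes_branches A v xs ts D"
| "refutes_branches A v _ _ D \<longleftrightarrow> False"

lemma within_domains_remove_color:
  assumes "within_domains g D" "\<forall>u\<in>set us. u < length D \<longrightarrow> g u \<noteq> x"
  shows "within_domains g (fold (\<lambda>u D'. D'[u := removeAll x (D' ! u)]) us D)
    \<and> length (fold (\<lambda>u D'. D'[u := removeAll x (D' ! u)]) us D) = length D"
  using assms
proof (induction us arbitrary: D)
  case (Cons u us)
  have "within_domains g (D[u := removeAll x (D ! u)])"
    unfolding within_domains_def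
  proof (intro allI impI)
    fix w assume "w < length (D[u := removeAll x (D ! u)])"
    with Cons.prems show "g w \<in> set (D[u := removeAll x (D ! u)] ! w)"
      by (cases "w = u") (auto simp: within_domains_def)
  qed
  with Cons show ?case by simp
qed simp

lemma within_domains_fix_color:
  assumes "within_domains g D" "colors_properly A (length D) g" "v < length D" "g v = x"
  shows "within_domains g (fix_color A v x D) \<and> length (fix_color A v x D) = length D"
proof -
  have "within_domains g (D[v := [x]])"
    using assms unfolding within_domains_def by (auto simp: nth_list_update)
  moreover have "\<forall>u\<in>set (A ! v). u < length (D[v := [x]]) \<longrightarrow> g u \<noteq> x"
    using assms unfolding colors_properly_def by auto
  ultimately show ?thesis
    using within_domains_remove_color unfolding fix_color_def by fastforce
qed

lemma refutes_sound:
  shows "refutes A t D \<Longrightarrow> within_domains g D \<Longrightarrow> colors_properly A (length D) g \<Longrightarrow> False"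
    and "refutes_branches A v xs ts D \<Longrightarrow> within_domains g D \<Longrightarrow> colors_properly A (length D) g
      \<Longrightarrow> v < length D \<Longrightarrow> g v \<in> set xs \<Longrightarrow> False"
proof (induction A t D and A v xs ts D rule: refutes_refutes_branches.induct)
  case (4 A v x xs t ts D)
  show False
  proof (cases "g v = x")
    case True
    with "4.prems" "4.IH"(1) show False
      using within_domains_fix_color[of g D A v x] by simp
  next
    case False
    with "4.prems" "4.IH"(2) show False by simp
  qed
qed (auto simp: within_domains_def)

lemma within_domains_fix_prefix:
  assumes "within_domains g D" "colors_properly A (length D) g" "m \<le> length D"
    and "\<forall>i<m. g i = i"
  shows "within_domains g (fold (\<lambda>i. fix_color A i i) [0..<m] D)
    \<and> length (fold (\<lambda>i. fix_color A i i) [0..<m] D) = length D"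
  using assms(3,4)
proof (induction m)
  case (Suc m)
  then show ?case
    using assms(2) within_domains_fix_color[of g "fold (\<lambda>i. fix_color A i i) [0..<m] D" A m m]
    by simp
qed (use assms(1) in simp)

lemma ex_color_renaming:
  fixes g :: "nat \<Rightarrow> nat"
  assumes "inj_on g {..<m}" "g ` {..<m} \<subseteq> {..<k}" "m \<le> k"
  shows "\<exists>\<pi>. inj_on \<pi> {..<k} \<and> \<pi> ` {..<k} \<subseteq> {..<k} \<and> (\<forall>i<m. \<pi> (g i) = i)"
  using assms
proof (induction m)
  case 0
  show ?case by (intro exI[of _ id]) auto
next
  case (Suc m)
  have "inj_on g {..<m}" "g ` {..<m} \<subseteq> {..<k}" "m \<le> k"
    using Suc.prems by (auto simp: image_subset_iff intro: inj_on_subset[of _ "{..<Suc m}"])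
  then obtain \<pi> where \<pi>: "inj_on \<pi> {..<k}" "\<pi> ` {..<k} \<subseteq> {..<k}" "\<forall>i<m. \<pi> (g i) = i"
    using Suc.IH by blast
  define a where "a = \<pi> (g m)"
  have "g m < k" "\<forall>i<m. g i < k \<and> g i \<noteq> g m"
    using Suc.prems by (auto simp: inj_on_def image_subset_iff)
  then have "a < k" "\<forall>i<m. a \<noteq> i"
    using \<pi> unfolding a_def by (auto simp: inj_on_eq_iff)
  have "m < k"
    using Suc.prems by simp
  have "inj_on (transpose a m \<circ> \<pi>) {..<k}"
    using \<pi>(1) inj_on_subset[OF inj_transpose subset_UNIV] by (rule comp_inj_on)
  moreover have "(transpose a m \<circ> \<pi>) ` {..<k} \<subseteq> {..<k}"
    using \<pi>(2) \<open>a < k\<close> \<open>m < k\<close> by (auto simp: transpose_def)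
  moreover have "\<forall>i<Suc m. (transpose a m \<circ> \<pi>) (g i) = i"
    using \<pi>(3) \<open>\<forall>i<m. a \<noteq> i\<close> by (auto simp: a_def less_Suc_eq)
  ultimately show ?case
    by blast
qed

lemma not_colorable_if_refuted:
  assumes "refutes A t (fold (\<lambda>i. fix_color A i i) [0..<m] (replicate n [0..<k]))"
    and clique: "\<forall>i<m. \<forall>j<i. j \<in> set (A ! i)" and "m \<le> n" "m \<le> k"
  shows "\<not> (colors_properly A n g \<and> (\<forall>v<n. g v < k))"
proof
  assume g: "colors_properly A n g \<and> (\<forall>v<n. g v < k)"
  have "inj_on g {..<m}"
    using g clique \<open>m \<le> n\<close> unfolding colors_properly_def inj_on_def
    by (metis lessThan_iff linorder_neqE_nat order_less_le_trans)
  then obtain \<pi> where \<pi>: "inj_on \<pi> {..<k}" "\<pi> ` {..<k} \<subseteq> {..<k}" "\<forall>i<m. \<pi> (g i) = i"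
    using ex_color_renaming[of g m k] g \<open>m \<le> n\<close> \<open>m \<le> k\<close> by fastforce
  have "colors_properly A n (\<pi> \<circ> g)"
    using g \<pi>(1) unfolding colors_properly_def by (simp add: inj_on_eq_iff)
  moreover have "within_domains (\<pi> \<circ> g) (replicate n [0..<k])"
    using g \<pi>(2) unfolding within_domains_def by auto
  ultimately show False
    using within_domains_fix_prefix[of "\<pi> \<circ> g" "replicate n [0..<k]" A m] \<pi>(3) \<open>m \<le> n\<close>
      refutes_sound(1)[OF assms(1), of "\<pi> \<circ> g"] by simp
qed

lemma kneser_colorable_imp_colors_properly:
  assumes "kneser_colorable \<B> k" "set Vs \<subseteq> \<B>"
    and edges: "\<forall>i<length Vs. \<forall>j\<in>set (A ! i). j < length Vs \<and> Vs ! i \<inter> Vs ! j = {}"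
  shows "\<exists>g. colors_properly A (length Vs) g \<and> (\<forall>v<length Vs. g v < k)"
proof -
  obtain c where range: "\<forall>B\<in>\<B>. c B < k"
    and proper: "\<forall>B1\<in>\<B>. \<forall>B2\<in>\<B>. B1 \<inter> B2 = {} \<longrightarrow> c B1 \<noteq> c B2"
    using assms(1) unfolding kneser_colorable_def by blast
  have vertex: "Vs ! i \<in> \<B>" if "i < length Vs" for i
    using assms(2) that by (meson nth_mem subsetD)
  have "colors_properly A (length Vs) (\<lambda>i. c (Vs ! i))"
    unfolding colors_properly_def
  proof (intro allI impI ballI)
    fix v u assume "v < length Vs" "u \<in> set (A ! v)" "u < length Vs"
    then show "c (Vs ! u) \<noteq> c (Vs ! v)"
      using proper edges vertex by (metis Int_commute)
  qed
  moreover have "\<forall>v<length Vs. c (Vs ! v) < k"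
    using range vertex by blast
  ultimately show ?thesis
    by blast
qed

(* Found by computer search.  The vertices 0, 1, 2 form a triangle, so the tree only
   has to refute the 4-colorings giving them the colors 0, 1, 2. *)

definition nonpappus_vertices :: "nat set list" where
  "nonpappus_vertices =
    [{1, 2, 4}, {5, 6, 7}, {3, 8, 9}, {1, 2, 6}, {1, 2, 8}, {1, 3, 5}, {1, 3, 6}, {1, 3, 9},
    {1, 4, 7}, {1, 4, 9}, {1, 5, 6}, {1, 5, 7}, {1, 5, 9}, {1, 6, 7}, {1, 6, 8}, {1, 6, 9},
    {1, 8, 9}, {2, 3, 4}, {2, 3, 6}, {2, 3, 8}, {2, 3, 9}, {2, 4, 6}, {2, 4, 7}, {2, 6, 7},
    {2, 7, 8}, {3, 4, 5}, {3, 4, 6}, {3, 5, 8}, {3, 6, 8}, {3, 6, 9}, {4, 5, 6}, {4, 5, 7},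
    {4, 5, 9}, {4, 6, 9}, {4, 7, 9}, {4, 8, 9}, {5, 7, 8}, {5, 8, 9}, {6, 7, 9}]"

definition nonpappus_adjacency :: "nat list list" where
  "nonpappus_adjacency =
    [[1, 2, 27, 28, 29, 36, 37, 38], [0, 2, 4, 7, 9, 16, 17, 19, 20, 35],
    [0, 1, 3, 8, 10, 11, 13, 21, 22, 23, 30, 31], [2, 25, 27, 31, 32, 34, 35, 36, 37],
    [1, 25, 26, 29, 30, 31, 32, 33, 34, 38], [21, 22, 23, 24, 33, 34, 35, 38],
    [22, 24, 31, 32, 34, 35, 36, 37], [1, 21, 22, 23, 24, 30, 31, 36],
    [2, 18, 19, 20, 27, 28, 29, 37], [1, 18, 19, 23, 24, 27, 28, 36],
    [2, 17, 19, 20, 22, 24, 34, 35], [2, 17, 18, 19, 20, 21, 26, 28, 29, 33, 35],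
    [17, 18, 19, 21, 22, 23, 24, 26, 28], [2, 17, 19, 20, 25, 27, 32, 35, 37],
    [17, 20, 22, 25, 31, 32, 34], [17, 19, 22, 24, 25, 27, 31, 36],
    [1, 17, 18, 21, 22, 23, 25, 26, 30, 31], [1, 10, 11, 12, 13, 14, 15, 16, 36, 37, 38],
    [8, 9, 11, 12, 16, 31, 32, 34, 35, 36, 37],
    [1, 8, 9, 10, 11, 12, 13, 15, 30, 31, 32, 33, 34, 38],
    [1, 8, 10, 11, 13, 14, 30, 31, 36], [2, 5, 7, 11, 12, 16, 27, 36, 37],
    [2, 5, 6, 7, 10, 12, 14, 15, 16, 27, 28, 29, 37],
    [2, 5, 7, 9, 12, 16, 25, 27, 32, 35, 37],
    [5, 6, 7, 9, 10, 12, 15, 25, 26, 29, 30, 32, 33], [3, 4, 13, 14, 15, 16, 23, 24, 38],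
    [4, 11, 12, 16, 24, 36, 37], [0, 3, 8, 9, 13, 15, 21, 22, 23, 33, 34, 38],
    [0, 8, 9, 11, 12, 22, 31, 32, 34], [0, 4, 8, 11, 22, 24, 31, 36],
    [2, 4, 7, 16, 19, 20, 24], [2, 3, 4, 6, 7, 14, 15, 16, 18, 19, 20, 28, 29],
    [3, 4, 6, 13, 14, 18, 19, 23, 24, 28], [4, 5, 11, 19, 24, 27, 36],
    [3, 4, 5, 6, 10, 14, 18, 19, 27, 28], [1, 3, 5, 6, 10, 11, 13, 18, 23],
    [0, 3, 6, 7, 9, 15, 17, 18, 20, 21, 26, 29, 33],
    [0, 3, 6, 8, 13, 17, 18, 21, 22, 23, 26], [0, 4, 5, 17, 19, 25, 27]]"

definition nonpappus_refutation :: search_tree where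
  "nonpappus_refutation =
    Branch 19 [(Branch 31 [(Branch 11 [(Branch 3 [(Branch 13 [(Branch 27 [(Branch 9
    [(Branch 28 [(Branch 32 [(Branch 15 [(Branch 25 [(Branch 4 [(Branch 14 [(Branch 22
    [(Branch 17 [(Branch 36 [(Branch 37 [(Branch 12 [(Branch 21 [(Branch 16 [(Branch 8
    [(Branch 10 [(Branch 34 [(Branch 20 [(Branch 35 [(Branch 18 [(Branch 5
    [(Leaf 33)])])])])])])])])])])])])])])])])])])])])]), (Branch 21 [(Branch 8 [(Branch 9
    [(Branch 28 [(Branch 32 [(Branch 15 [(Branch 25 [(Branch 4 [(Branch 16 [(Branch 14
    [(Branch 22 [(Branch 17 [(Leaf 10)])])])])])])])])])])])])]), (Branch 35 [(Branch 27
    [(Branch 8 [(Branch 18 [(Branch 28 [(Branch 32 [(Branch 34 [(Branch 6 [(Branch 22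
    [(Branch 16 [(Branch 17 [(Branch 12 [(Branch 25 [(Branch 9 [(Branch 24
    [(Leaf 15)])])])])])])])])])])])])]), (Branch 9 [(Branch 18 [(Branch 28 [(Branch 32
    [(Branch 23 [(Branch 15 [(Branch 33 [(Branch 5 [(Branch 22 [(Branch 34
    [(Leaf 6)])])])])])])])])])])])])]), (Branch 36 [(Branch 27 [(Branch 34 [(Branch 13
    [(Branch 28 [(Leaf 8)])])]), (Branch 34 [(Branch 9 [(Branch 28 [(Branch 32 [(Branch 23
    [(Branch 13 [(Branch 35 [(Branch 18 [(Branch 5 [(Leaf 33)])])])])])])])])])]), (Branch 9
    [(Branch 18 [(Branch 28 [(Branch 32 [(Branch 23 [(Branch 34 [(Branch 27 [(Branch 13
    [(Branch 17 [(Branch 20 [(Branch 35 [(Branch 5 [(Leaf 33)])])])])])])])])])])])])])]),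
    (Branch 28 [(Branch 9 [(Branch 29 [(Branch 36 [(Branch 21 [(Branch 33 [(Branch 27
    [(Branch 23 [(Branch 34 [(Branch 4 [(Branch 3 [(Branch 13 [(Branch 32 [(Branch 24
    [(Branch 35 [(Leaf 6)])])])])])])])])])])])])])])])]), (Branch 11 [(Branch 28 [(Branch 9
    [(Branch 29 [(Branch 36 [(Branch 4 [(Branch 3 [(Branch 15 [(Branch 27 [(Branch 23
    [(Branch 16 [(Branch 18 [(Branch 34 [(Branch 13 [(Branch 17 [(Branch 32 [(Branch 24
    [(Branch 25 [(Branch 35 [(Leaf 6)])])])])])])])])])])])])])])])])])]), (Branch 17
    [(Branch 16 [(Branch 18 [(Branch 35 [(Branch 4 [(Branch 26 [(Branch 36 [(Branch 20
    [(Branch 7 [(Branch 21 [(Branch 9 [(Branch 24 [(Branch 27 [(Branch 23 [(Branch 32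
    [(Branch 12 [(Branch 22 [(Leaf 15)])])])])])])])])])]), (Branch 9 [(Branch 28 [(Branch 8
    [(Branch 27 [(Branch 37 [(Branch 3 [(Branch 13 [(Branch 32 [(Branch 21 [(Branch 25
    [(Leaf 14)])])])])])])])])])])])]), (Branch 29 [(Branch 8 [(Branch 33 [(Branch 27
    [(Branch 9 [(Branch 36 [(Branch 20 [(Branch 7 [(Branch 22 [(Branch 24 [(Branch 23
    [(Leaf 12)])])])])])])])])])])])])]), (Branch 8 [(Branch 37 [(Branch 36 [(Branch 20
    [(Branch 7 [(Branch 21 [(Branch 27 [(Branch 34 [(Branch 9 [(Branch 23 [(Branch 10
    [(Branch 22 [(Branch 24 [(Leaf 12)])])])])])])])])])]), (Branch 9 [(Branch 27 [(Branch 3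
    [(Branch 13 [(Branch 32 [(Branch 4 [(Branch 21 [(Branch 25
    [(Leaf 14)])])])])])])])])])])])])]), (Branch 16 [(Branch 21 [(Branch 36 [(Branch 37
    [(Branch 22 [(Leaf 15)])])])])])])])]), (Branch 9 [(Branch 23 [(Branch 27 [(Branch 37
    [(Branch 17 [(Branch 12 [(Branch 18 [(Branch 11 [(Branch 22 [(Branch 24 [(Branch 6
    [(Branch 31 [(Branch 36 [(Leaf 20)])])]), (Branch 5 [(Branch 34 [(Branch 7 [(Branch 31
    [(Branch 36 [(Leaf 20)])])])])])]), (Branch 28 [(Branch 10 [(Branch 34 [(Branch 6
    [(Branch 31 [(Branch 36 [(Leaf 20)])])])])])])])])])]), (Branch 12 [(Branch 38
    [(Branch 22 [(Branch 10 [(Branch 15 [(Branch 31 [(Branch 18 [(Branch 32 [(Branch 34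
    [(Branch 3 [(Branch 13 [(Branch 25 [(Leaf 14)])])])])])]), (Branch 18 [(Branch 36
    [(Leaf 20)])])])])]), (Branch 36 [(Branch 18 [(Branch 32 [(Leaf 6)])]), (Branch 7
    [(Branch 29 [(Branch 31 [(Branch 11 [(Leaf 20)])])])])])])])])]), (Branch 22 [(Branch 12
    [(Branch 24 [(Branch 6 [(Branch 10 [(Branch 35 [(Branch 3 [(Branch 36
    [(Leaf 15)])])])])]), (Branch 5 [(Branch 6 [(Branch 34 [(Branch 3 [(Branch 7 [(Branch 31
    [(Branch 36 [(Branch 17 [(Branch 18 [(Branch 11 [(Leaf 20)])])])])])])])])])])])]),
    (Branch 17 [(Branch 12 [(Branch 13 [(Branch 28 [(Branch 10 [(Branch 15 [(Branch 24
    [(Branch 31 [(Branch 3 [(Branch 36 [(Leaf 6)])]), (Branch 18 [(Branch 36 [(Branch 16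
    [(Branch 3 [(Leaf 35)])])])])]), (Branch 25 [(Branch 3 [(Branch 31
    [(Leaf 6)])])])])])])])])]), (Branch 36 [(Branch 18 [(Branch 3 [(Branch 32 [(Branch 21
    [(Branch 16 [(Branch 31 [(Branch 12 [(Branch 25 [(Branch 24 [(Branch 4
    [(Leaf 30)])])])])])])])])])]), (Branch 15 [(Branch 29 [(Branch 24 [(Branch 33
    [(Branch 4 [(Branch 31 [(Branch 18 [(Branch 32 [(Leaf 3)])])])])]), (Branch 32
    [(Branch 4 [(Branch 31 [(Leaf 3)])])])])])])])])])]), (Branch 38 [(Branch 22 [(Branch 12
    [(Branch 15 [(Branch 24 [(Branch 5 [(Branch 7 [(Branch 31 [(Branch 36 [(Branch 17
    [(Branch 18 [(Branch 11 [(Leaf 20)])])])])])])])])])]), (Branch 15 [(Branch 31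
    [(Branch 3 [(Branch 32 [(Branch 18 [(Branch 37 [(Branch 17 [(Branch 34 [(Branch 28
    [(Branch 35 [(Branch 10 [(Branch 14 [(Branch 24 [(Branch 33 [(Branch 11 [(Branch 4
    [(Branch 21 [(Branch 16 [(Leaf 25)])])])])]), (Branch 25 [(Branch 16 [(Branch 21
    [(Branch 36 [(Leaf 29)])])])])])])])])])])])])])])]), (Branch 28 [(Branch 29 [(Branch 4
    [(Branch 32 [(Branch 24 [(Leaf 33)])])])])])])])])])]), (Branch 27 [(Branch 38
    [(Branch 22 [(Branch 16 [(Branch 17 [(Branch 12 [(Branch 18 [(Branch 11 [(Branch 34
    [(Branch 4 [(Branch 3 [(Branch 13 [(Branch 7 [(Branch 24
    [(Leaf 15)])])])])])])])])])])]), (Branch 15 [(Branch 17 [(Branch 37 [(Branch 16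
    [(Branch 21 [(Branch 36 [(Branch 29 [(Branch 4 [(Branch 32 [(Branch 24
    [(Leaf 33)])])])])])])])])])])])]), (Branch 37 [(Branch 22 [(Branch 16 [(Branch 18
    [(Branch 12 [(Branch 7 [(Branch 24 [(Branch 36 [(Leaf 15)])])])])])]), (Branch 18
    [(Branch 16 [(Branch 21 [(Branch 36 [(Branch 35 [(Branch 11 [(Branch 3 [(Branch 31
    [(Branch 13 [(Branch 17 [(Branch 28 [(Branch 6 [(Branch 10 [(Branch 24 [(Branch 34
    [(Leaf 14)])])])])])])])])])])])])])]), (Branch 8 [(Branch 31 [(Branch 16 [(Branch 3
    [(Branch 6 [(Branch 36 [(Leaf 15)])])])]), (Branch 28 [(Branch 15 [(Branch 29
    [(Branch 36 [(Branch 24 [(Branch 32 [(Branch 4 [(Branch 3 [(Branch 12 [(Branch 13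
    [(Branch 17 [(Leaf 14)])])])])])]), (Branch 33 [(Branch 11 [(Branch 4 [(Branch 38
    [(Branch 25 [(Branch 16 [(Branch 21 [(Branch 5 [(Branch 35 [(Branch 3 [(Branch 13
    [(Branch 17 [(Branch 20 [(Branch 6 [(Branch 10 [(Branch 34
    [(Leaf 14)])])])])])])])])])])])])])])])])])])])])])])])])]), (Branch 17 [(Branch 16
    [(Branch 12 [(Branch 18 [(Branch 11 [(Branch 22 [(Branch 7 [(Branch 24 [(Branch 36
    [(Leaf 6)])])]), (Branch 28 [(Branch 10 [(Branch 34 [(Branch 6 [(Branch 31 [(Branch 36
    [(Leaf 7)])])])])])])])])])])]), (Branch 38 [(Branch 36 [(Branch 18 [(Branch 15
    [(Branch 31 [(Branch 25 [(Branch 16 [(Branch 21 [(Branch 14 [(Branch 32 [(Branch 24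
    [(Leaf 26)])])])])])])])])]), (Branch 7 [(Branch 22 [(Branch 12 [(Branch 10 [(Branch 20
    [(Branch 31 [(Branch 18 [(Branch 34 [(Branch 35 [(Branch 5 [(Branch 15 [(Branch 25
    [(Branch 16 [(Branch 29 [(Branch 24 [(Leaf 30)])])])])])])])])])])])])]), (Branch 29
    [(Branch 31 [(Branch 11 [(Leaf 20)])])])])])])])])])])]), (Branch 36 [(Branch 27
    [(Branch 23 [(Branch 38 [(Branch 22 [(Branch 15 [(Branch 31 [(Branch 18 [(Branch 4
    [(Branch 16 [(Branch 3 [(Leaf 35)])])])]), (Branch 28 [(Branch 17 [(Branch 13
    [(Branch 32 [(Branch 35 [(Branch 18 [(Branch 34 [(Leaf 6)])])])])]), (Branch 16
    [(Branch 21 [(Branch 14 [(Branch 32 [(Branch 34 [(Branch 18 [(Branch 4 [(Branch 3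
    [(Leaf 35)])])])])])])])])])])])]), (Branch 16 [(Branch 17 [(Leaf 15)])])])])]),
    (Branch 18 [(Branch 31 [(Branch 28 [(Branch 11 [(Branch 23 [(Branch 16 [(Branch 17
    [(Branch 15 [(Branch 25 [(Branch 13 [(Branch 32 [(Branch 35 [(Branch 38 [(Branch 5
    [(Branch 22 [(Branch 34 [(Leaf 6)])])])])])])])])]), (Branch 12 [(Branch 15 [(Branch 22
    [(Branch 24 [(Leaf 7)])])])])]), (Branch 21 [(Branch 22 [(Branch 15 [(Branch 17
    [(Branch 32 [(Branch 13 [(Branch 35 [(Branch 6 [(Branch 34 [(Branch 5 [(Branch 10
    [(Branch 33 [(Branch 24 [(Branch 25 [(Leaf 38)])])])])])])])])]), (Branch 3 [(Branch 13
    [(Branch 25 [(Leaf 14)])])])]), (Branch 14 [(Branch 32 [(Branch 34 [(Branch 10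
    [(Branch 35 [(Branch 5 [(Branch 6 [(Branch 37 [(Branch 8 [(Branch 29 [(Branch 24
    [(Leaf 33)])])])])])])])])])])])])]), (Branch 12 [(Branch 17 [(Branch 10 [(Branch 34
    [(Branch 35 [(Branch 5 [(Branch 15 [(Branch 33 [(Branch 38 [(Branch 25 [(Branch 24
    [(Branch 4 [(Leaf 32)])])])])])])])])])]), (Branch 37 [(Branch 3 [(Branch 8 [(Branch 32
    [(Branch 13 [(Branch 24 [(Branch 6 [(Branch 35 [(Leaf 10)])]), (Branch 25 [(Branch 5
    [(Leaf 38)])])])]), (Branch 14 [(Branch 4 [(Branch 26 [(Branch 30 [(Branch 24 [(Branch 6
    [(Branch 35 [(Leaf 10)])])])])]), (Branch 25 [(Branch 13 [(Branch 29 [(Branch 26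
    [(Branch 24 [(Branch 5 [(Leaf 38)])])])])])])])])])])])])])])])])]), (Branch 32
    [(Branch 3 [(Branch 12 [(Branch 21 [(Branch 22 [(Branch 6 [(Branch 37 [(Branch 35
    [(Branch 5 [(Branch 8 [(Branch 10 [(Branch 24 [(Branch 34 [(Branch 15 [(Branch 25
    [(Leaf 14)])])])])])])])])])]), (Branch 17 [(Branch 13 [(Branch 10 [(Branch 34
    [(Branch 35 [(Branch 5 [(Branch 6 [(Branch 15 [(Branch 25 [(Leaf 14)])])])])])])])]),
    (Branch 37 [(Branch 16 [(Branch 25 [(Branch 4 [(Branch 8 [(Branch 14 [(Branch 26
    [(Branch 30 [(Branch 24 [(Branch 6 [(Branch 35
    [(Leaf 10)])])])])])])])])])])])])])])])])])]), (Branch 21 [(Branch 35 [(Branch 29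
    [(Branch 33 [(Branch 24 [(Branch 4 [(Leaf 32)])])])])])])])]), (Branch 16 [(Branch 3
    [(Branch 15 [(Branch 17 [(Branch 11 [(Branch 12 [(Branch 22 [(Branch 24
    [(Leaf 29)])])])])])])])])]), (Branch 23 [(Branch 16 [(Branch 21 [(Branch 35 [(Branch 11
    [(Branch 3 [(Branch 31 [(Branch 28 [(Branch 22 [(Branch 6 [(Branch 10 [(Branch 24
    [(Branch 34 [(Branch 15 [(Branch 14 [(Branch 17 [(Branch 13 [(Leaf 25)])])])])])])])]),
    (Branch 37 [(Branch 12 [(Branch 5 [(Branch 10 [(Branch 24 [(Branch 17 [(Branch 32
    [(Branch 25 [(Branch 4 [(Leaf 30)])])])])])])])])])])])])])])])])]), (Branch 37
    [(Branch 3 [(Branch 32 [(Branch 21 [(Branch 16 [(Branch 31 [(Branch 12 [(Branch 25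
    [(Branch 4 [(Branch 28 [(Branch 35 [(Branch 11 [(Branch 5 [(Branch 14 [(Branch 22
    [(Branch 17 [(Branch 10 [(Branch 24
    [(Leaf 30)])])])])])])])])])])])])])])])])])])])])]), (Branch 27 [(Branch 23 [(Branch 7
    [(Branch 22 [(Branch 21 [(Branch 15 [(Branch 17 [(Branch 13 [(Branch 32 [(Branch 18
    [(Branch 31 [(Branch 34 [(Leaf 6)])])])])])])])])])])]), (Branch 17 [(Branch 11
    [(Branch 18 [(Branch 28 [(Branch 29 [(Branch 31 [(Branch 8 [(Branch 15 [(Branch 22
    [(Branch 6 [(Branch 37 [(Branch 32 [(Branch 23 [(Branch 34 [(Branch 13 [(Branch 20
    [(Branch 35 [(Branch 5 [(Branch 21 [(Branch 7 [(Branch 10 [(Branch 30 [(Branch 33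
    [(Branch 24 [(Branch 4 [(Branch 25 [(Leaf 38)])])])])])])])])])])])])])])])])]),
    (Branch 12 [(Branch 21 [(Branch 7 [(Branch 10 [(Branch 34 [(Branch 20 [(Branch 35
    [(Branch 5 [(Branch 26 [(Branch 4 [(Branch 30 [(Branch 24 [(Branch 33 [(Branch 38
    [(Branch 25 [(Branch 23 [(Branch 32
    [(Leaf 3)])])])])])])])])])])])])])])])])])])])])])])])]), (Branch 20 [(Branch 29
    [(Branch 31 [(Branch 16 [(Branch 7 [(Branch 22 [(Branch 24 [(Branch 23
    [(Leaf 12)])])])])])])])])]), (Branch 38 [(Branch 11 [(Branch 18 [(Branch 37 [(Branch 12
    [(Branch 23 [(Branch 20 [(Branch 31 [(Branch 16 [(Branch 7 [(Branch 22
    [(Leaf 15)])])])])])])])])]), (Branch 18 [(Branch 16 [(Branch 12 [(Branch 23 [(Branch 25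
    [(Branch 28 [(Branch 7 [(Branch 22 [(Branch 31 [(Leaf 15)])])])])])])])])])])])])])])]),
    (Branch 31 [(Branch 11 [(Branch 17 [(Branch 16 [(Branch 21 [(Branch 36 [(Branch 37
    [(Branch 3 [(Branch 12 [(Branch 22 [(Leaf 15)])])])])])])]), (Branch 16 [(Branch 36
    [(Branch 18 [(Branch 3 [(Branch 21 [(Branch 35 [(Branch 6 [(Branch 7 [(Branch 15
    [(Branch 27 [(Branch 22 [(Branch 13 [(Branch 25 [(Branch 24 [(Branch 5 [(Branch 8
    [(Branch 9 [(Branch 10 [(Branch 14 [(Branch 32 [(Branch 34 [(Branch 20 [(Branch 28
    [(Branch 26 [(Branch 4 [(Leaf 33)])])])])])])])])])])])])])])])])])])])])])])]),
    (Branch 20 [(Branch 7 [(Branch 21 [(Branch 37 [(Branch 9 [(Branch 23 [(Branch 15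
    [(Branch 22 [(Branch 24 [(Leaf 12)])])])])])])])])])])])]), (Branch 18 [(Branch 16
    [(Branch 21 [(Branch 12 [(Branch 22 [(Branch 23 [(Leaf 9)])])])])]), (Branch 16
    [(Branch 36 [(Branch 3 [(Branch 15 [(Branch 27 [(Branch 13 [(Branch 17 [(Branch 25
    [(Branch 35 [(Branch 6 [(Branch 22 [(Branch 24 [(Branch 8 [(Branch 9 [(Branch 28
    [(Branch 10 [(Branch 14 [(Branch 32 [(Branch 34 [(Branch 20 [(Branch 26 [(Branch 4
    [(Leaf 33)])])])])])])])])])])])])])])])])])])])]), (Branch 20 [(Branch 7 [(Branch 21
    [(Branch 9 [(Branch 23 [(Branch 37 [(Branch 12 [(Branch 24
    [(Leaf 15)])])])])])])])])])])])]), (Branch 11 [(Branch 17 [(Branch 15 [(Branch 38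
    [(Branch 22 [(Branch 37 [(Branch 18 [(Branch 3 [(Branch 32 [(Branch 23
    [(Leaf 9)])])])])]), (Branch 27 [(Branch 37 [(Branch 16 [(Branch 23 [(Branch 13
    [(Branch 21 [(Branch 36 [(Leaf 33)])])])])])])])])])]), (Branch 36 [(Branch 21
    [(Branch 33 [(Branch 27 [(Branch 13 [(Branch 8 [(Branch 38 [(Branch 22 [(Branch 16
    [(Branch 18 [(Branch 35 [(Branch 5 [(Branch 6 [(Branch 24 [(Branch 7 [(Branch 9
    [(Branch 28 [(Branch 10 [(Branch 15 [(Branch 14 [(Branch 32 [(Branch 34 [(Branch 4
    [(Leaf 26)])])])])])])])])])])])])])])]), (Branch 28 [(Branch 32 [(Branch 34 [(Branch 4
    [(Branch 3 [(Branch 25 [(Branch 35 [(Leaf 6)])])])])])])])])])])])])])]), (Branch 18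
    [(Branch 20 [(Branch 35 [(Branch 9 [(Branch 15 [(Branch 29 [(Branch 22 [(Branch 37
    [(Branch 10 [(Branch 33 [(Branch 24 [(Branch 12 [(Branch 27 [(Branch 34 [(Branch 38
    [(Branch 25 [(Branch 23 [(Branch 32 [(Leaf 3)])])])])]), (Branch 23 [(Branch 32
    [(Leaf 3)])])])])])])])])])])])])])])])])]), (Branch 3 [(Branch 32 [(Branch 13
    [(Branch 17 [(Branch 15 [(Branch 38 [(Branch 22 [(Branch 37 [(Branch 23 [(Leaf 12)])]),
    (Branch 27 [(Branch 37 [(Branch 16 [(Branch 23 [(Branch 34 [(Branch 21 [(Branch 36
    [(Branch 25 [(Branch 24 [(Branch 28 [(Branch 35 [(Branch 18 [(Branch 5
    [(Leaf 33)])])])])])])])])])])])])])])])]), (Branch 36 [(Branch 23 [(Branch 16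
    [(Branch 9 [(Branch 28 [(Branch 22 [(Branch 10 [(Branch 34 [(Leaf 14)])]), (Branch 27
    [(Branch 37 [(Branch 12 [(Branch 21 [(Branch 10 [(Branch 24 [(Branch 25 [(Branch 5
    [(Leaf 38)])])])])])])])])])])])]), (Branch 35 [(Branch 27 [(Branch 34 [(Branch 28
    [(Branch 22 [(Leaf 14)])])]), (Branch 34 [(Branch 5 [(Leaf 33)])])])])]), (Branch 20
    [(Branch 9 [(Branch 18 [(Branch 23 [(Branch 35 [(Branch 7 [(Branch 21 [(Branch 15
    [(Branch 29 [(Branch 22 [(Branch 24 [(Branch 27 [(Branch 37 [(Branch 34 [(Branch 12
    [(Branch 25 [(Leaf 38)])])])])])])])])])])])])])])])])])])]), (Branch 28 [(Branch 22
    [(Branch 6 [(Branch 35 [(Branch 10 [(Branch 24 [(Branch 34 [(Branch 9 [(Branch 36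
    [(Branch 15 [(Branch 14 [(Branch 17 [(Branch 13 [(Leaf 25)])])])])])])])])])])]),
    (Branch 10 [(Branch 24 [(Branch 30 [(Branch 4 [(Branch 25 [(Branch 16 [(Branch 17
    [(Branch 18 [(Leaf 12)])])])])])]), (Branch 6 [(Branch 29 [(Branch 36 [(Branch 27
    [(Branch 34 [(Branch 9 [(Branch 18 [(Branch 37 [(Branch 17 [(Branch 35 [(Branch 5
    [(Leaf 33)])])])])])])]), (Branch 21 [(Branch 12 [(Branch 17 [(Branch 37 [(Branch 16
    [(Branch 25 [(Branch 23 [(Branch 13 [(Branch 5 [(Leaf 38)])])])])])])])])])]),
    (Branch 17 [(Branch 18 [(Leaf 12)])])])])])])])])])]), (Branch 36 [(Branch 27
    [(Branch 13 [(Branch 35 [(Branch 8 [(Branch 18 [(Branch 38 [(Branch 17 [(Branch 25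
    [(Branch 22 [(Branch 16 [(Branch 6 [(Branch 10 [(Branch 15 [(Branch 24 [(Branch 9
    [(Branch 28 [(Branch 14 [(Branch 32 [(Branch 34 [(Branch 4
    [(Leaf 26)])])])])])])])])])])]), (Branch 28 [(Branch 32 [(Branch 34
    [(Leaf 6)])])])])])])])])])])]), (Branch 9 [(Branch 15 [(Branch 33 [(Branch 38
    [(Branch 25 [(Branch 4 [(Branch 29 [(Branch 22 [(Branch 37 [(Branch 17 [(Branch 18
    [(Branch 16 [(Leaf 26)])])])]), (Branch 16 [(Branch 21 [(Branch 28 [(Branch 5
    [(Branch 35 [(Branch 13 [(Branch 37 [(Leaf 6)])])])])])])])])])])])])])])])]), (Branch 9
    [(Branch 18 [(Branch 15 [(Branch 17 [(Branch 29 [(Branch 22 [(Branch 27 [(Branch 37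
    [(Branch 10 [(Branch 34 [(Branch 20 [(Branch 35 [(Branch 33 [(Branch 4 [(Branch 25
    [(Leaf 38)])])])])])])])])])])])])])])])])])])])]"

lemma length_nonpappus_vertices: "length nonpappus_vertices = 39"
  by (simp add: nonpappus_vertices_def)

lemma N_not_kneser_colorable_4: "\<not> kneser_colorable N_bases 4"
proof
  assume "kneser_colorable N_bases 4"
  moreover have "set nonpappus_vertices \<subseteq> N_bases"
    unfolding N_bases_def set_subset_rank3_bases_iff nonpappus_vertices_def nonpappus_lines_def
    by code_simp
  moreover have "\<forall>i<length nonpappus_vertices. \<forall>j\<in>set (nonpappus_adjacency ! i).
      j < length nonpappus_vertices \<and> nonpappus_vertices ! i \<inter> nonpappus_vertices ! j = {}"
    unfolding nonpappus_vertices_def nonpappus_adjacency_def by code_simp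
  ultimately have "\<exists>g. colors_properly nonpappus_adjacency (length nonpappus_vertices) g
      \<and> (\<forall>v<length nonpappus_vertices. g v < 4)"
    by (rule kneser_colorable_imp_colors_properly)
  then obtain g where g: "colors_properly nonpappus_adjacency 39 g" "\<forall>v<39. g v < 4"
    unfolding length_nonpappus_vertices by blast
  have "refutes nonpappus_adjacency nonpappus_refutation
      (fold (\<lambda>i. fix_color nonpappus_adjacency i i) [0..<3] (replicate 39 [0..<4]))"
    by code_simp
  moreover have "\<forall>i<3. \<forall>j<i. j \<in> set (nonpappus_adjacency ! i)"
    unfolding nonpappus_adjacency_def by code_simp
  ultimately show False
    using not_colorable_if_refuted[of _ _ 3 39 4 g] g by simp
qed

theorem proposition4p7:
  shows "kneser_chromatic_number F7_bases = 3 \<and> kneser_chromatic_number N_bases = 5"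
proof
  show "kneser_chromatic_number F7_bases = 3"
    using rank3_bases_kneser_colorable[of "{1..7}" 7 3] F7_not_kneser_colorable_2
    by (simp add: F7_bases_def kneser_chromatic_number_eqI)
  show "kneser_chromatic_number N_bases = 5"
    using rank3_bases_kneser_colorable[of "{1..9}" 9 5] N_not_kneser_colorable_4
    by (simp add: N_bases_def kneser_chromatic_number_eqI)
qed

end
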